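(* Let $(X,\Sigma,\mu)$ be a probability space, let $\mathcal{P},\mathcal{Q},\mathcal{R}\subseteq\Sigma$ be countable partitions, and let $A\in\Sigma$ with $\mu(A)>0$. Then \[\mu(A)\,\mathrm{I}_{\mu_{|A}}(\mathcal{P};\mathcal{Q}\,|\,\mathcal{R})\le\log2+\mathrm{I}_\mu(\mathcal{P};\mathcal{Q}\,|\,\mathcal{R}).\]
   Context: $\mu_{|A}=\mu(A\cap\cdot)/\mu(A)$ is the conditioned measure. $\mathrm{I}_\mu(\mathcal{P};\mathcal{Q}\,|\,\mathcal{R})=\mathrm{H}_\mu(\mathcal{P}\,|\,\mathcal{R})-\mathrm{H}_\mu(\mathcal{P}\,|\,\mathcal{Q}\vee\mathcal{R})$ is conditional mutual information. *)

theory Defs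
  imports "HOL-Probability.Probability"
begin

definition countable_partition :: "'a measure \<Rightarrow> 'a set set \<Rightarrow> bool" where
  "countable_partition M P \<longleftrightarrow>
     countable P \<and> P \<subseteq> sets M \<and> disjoint P \<and> \<Union>P = space M"

definition join_partition :: "'a set set \<Rightarrow> 'a set set \<Rightarrow> 'a set set" where
  "join_partition Q R = {q \<inter> r | q r. q \<in> Q \<and> r \<in> R}"

definition eta :: "real \<Rightarrow> real" where
  "eta t = (if t \<le> 0 then 0 else - t * ln t)"

definition part_entropy :: "'a measure \<Rightarrow> 'a set set \<Rightarrow> ennreal" where
  "part_entropy M P = (\<integral>\<^sup>+ p. ennreal (eta (measure M p)) \<partial>count_space P)"

text \<open>Conditional entropy H(P|R) = sum over r in R of mu(r) H_{mu|r}(P);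
  the conditioned measure mu|r = mu(r \<inter> .)/mu(r) is uniform_measure M r.\<close>
definition cond_entropy :: "'a measure \<Rightarrow> 'a set set \<Rightarrow> 'a set set \<Rightarrow> ennreal" where
  "cond_entropy M P R =
     (\<integral>\<^sup>+ r. ennreal (measure M r) * part_entropy (uniform_measure M r) P \<partial>count_space R)"

definition cond_mutual_info ::
  "'a measure \<Rightarrow> 'a set set \<Rightarrow> 'a set set \<Rightarrow> 'a set set \<Rightarrow> ereal" where
  "cond_mutual_info M P Q R =
     enn2ereal (cond_entropy M P R) - enn2ereal (cond_entropy M P (join_partition Q R))"

end

theory Submission
  imports Defs
begin

(* Everything is expressed through the unnormalised entropy of P on a set c,
     H(c) = sum_{p in P} mu(p \<inter> c) log (mu(c) / mu(p \<inter> c)) = mu(c) H_{mu|c}(P),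
   so that H(P|T) = sum_{t in T} H(t) and mu(A) H_{mu|A}(P|T) = sum_{t in T} H(t \<inter> A).
   With S = Q v R and A' the complement of A, the claim reduces to
     sum_R H(r \<inter> A) + sum_S H(c) <= sum_R H(r) + sum_S H(c \<inter> A) + log 2,
   which follows from four facts about H:
     (a) H is superadditive on disjoint sets (log-sum inequality), so H(r \<inter> A) + H(r \<inter> A') <= H(r);
     (b) H(c) <= H(c \<inter> A) + H(c \<inter> A') + h(mu(c \<inter> A), mu(c \<inter> A')), h the binary entropy;
     (c) refining R to S can only decrease sum H(. \<inter> A'), by countable superadditivity;
     (d) the binary entropies h(mu(c \<inter> A), mu(c \<inter> A')) over c in S sum to at most log 2.
   The file first proves the real inequalities behind (a), (b), (d), then a countable
   superadditivity principle, then the properties of H, and finally assembles the theorem. *)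

(* The entropy contribution of a cell of mass x inside a set of mass y, x log (y/x);
   by the conventions ln 0 = 0 and t / 0 = 0 it vanishes for x = 0. *)
definition ent :: "real \<Rightarrow> real \<Rightarrow> real" where
  "ent x y = x * ln (y / x)"

lemma ent_zero [simp]: "ent 0 y = 0"
  by (simp add: ent_def)

lemma ent_nonneg: "0 \<le> x \<Longrightarrow> x \<le> y \<Longrightarrow> 0 \<le> ent x y"
  by (cases "x = 0") (simp_all add: ent_def)

lemma ent_scale: "0 < a \<Longrightarrow> a * ent (x / a) (y / a) = ent x y"
  by (simp add: ent_def)

lemma eta_scale:
  assumes "0 < m" "0 \<le> x"
  shows "m * eta (x / m) = ent x m"
proof (cases "x = 0")
  case False
  then have "0 < x" "0 < x / m" using assms by simp_all
  then have "eta (x / m) = - (x / m) * ln (x / m)"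
    by (simp add: eta_def)
  then have "m * eta (x / m) = - x * ln (x / m)"
    using assms by simp
  also have "\<dots> = ent x m"
    using assms \<open>0 < x\<close> by (simp add: ent_def ln_div algebra_simps)
  finally show ?thesis .
qed (simp add: eta_def)

(* Gibbs inequality in tangent-line form (from ln t <= t - 1); the core estimate for
   the log-sum inequality and the binary entropy bound. *)
lemma ent_tangent:
  assumes "0 \<le> u" "u \<le> v" "0 < k"
  shows "ent u v \<le> u * ln k + v / k - u"
proof (cases "u = 0")
  case True
  then show ?thesis using assms by simp
next
  case False
  then have u: "0 < u" and v: "0 < v" using assms by auto
  have "ent u v = u * ln k + u * ln (v / (k * u))"
    using u v assms(3) by (simp add: ent_def ln_div ln_mult algebra_simps)
  also have "\<dots> \<le> u * ln k + u * (v / (k * u) - 1)"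
    using u v assms(3) by (intro add_left_mono mult_left_mono ln_le_minus_one) auto
  also have "u * (v / (k * u) - 1) = v / k - u"
    using u by (simp add: right_diff_distrib)
  finally show ?thesis by simp
qed

lemma ent_superadd:
  assumes "0 \<le> x1" "x1 \<le> y1" "0 \<le> x2" "x2 \<le> y2"
  shows "ent x1 y1 + ent x2 y2 \<le> ent (x1 + x2) (y1 + y2)"
proof (cases "x1 + x2 = 0")
  case True
  then have "x1 = 0" "x2 = 0" using assms by auto
  then show ?thesis by simp
next
  case False
  define x y where "x = x1 + x2" and "y = y1 + y2"
  have pos: "0 < x" "x \<le> y" using assms False by (auto simp: x_def y_def)
  have "ent x1 y1 + ent x2 y2
          \<le> (x1 * ln (y / x) + y1 / (y / x) - x1) + (x2 * ln (y / x) + y2 / (y / x) - x2)"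
    using assms pos by (intro add_mono ent_tangent) auto
  also have "\<dots> = x * ln (y / x) + y / (y / x) - x"
    by (simp add: x_def y_def add_divide_distrib distrib_right)
  also have "y / (y / x) = x"
    using pos by simp
  finally show ?thesis by (simp add: ent_def x_def y_def)
qed

lemma ent_subadd_left:
  assumes "0 \<le> x1" "0 \<le> x2" "0 \<le> y"
  shows "ent (x1 + x2) y \<le> ent x1 y + ent x2 y"
proof -
  have part: "xi * ln (y / (x1 + x2)) \<le> ent xi y" if "0 \<le> xi" "xi \<le> x1 + x2" for xi
  proof (cases "xi = 0 \<or> y = 0")
    case False
    then have "0 < xi" "0 < y" using that assms by auto
    then show ?thesis
      using that by (auto simp: ent_def intro!: mult_left_mono divide_left_mono)
  qed (auto simp: ent_def)
  have "ent (x1 + x2) y = x1 * ln (y / (x1 + x2)) + x2 * ln (y / (x1 + x2))"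
    by (simp add: ent_def distrib_right)
  also have "\<dots> \<le> ent x1 y + ent x2 y"
    using assms by (intro add_mono part) auto
  finally show ?thesis .
qed

lemma ent_change_total:
  assumes "0 \<le> x" "x \<le> y1" "y1 \<le> y"
  shows "ent x y = ent x y1 + x * ln (y / y1)"
proof (cases "x = 0")
  case False
  then have "0 < x" "0 < y1" "0 < y" using assms by auto
  then show ?thesis by (simp add: ent_def ln_div algebra_simps)
qed simp

lemma ent_union_le:
  assumes "0 \<le> x1" "x1 \<le> y1" "0 \<le> x2" "x2 \<le> y2"
  shows "ent (x1 + x2) (y1 + y2)
           \<le> ent x1 y1 + ent x2 y2 + x1 * ln ((y1 + y2) / y1) + x2 * ln ((y1 + y2) / y2)"
  using ent_subadd_left[of x1 x2 "y1 + y2"]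
    ent_change_total[of x1 y1 "y1 + y2"] ent_change_total[of x2 y2 "y1 + y2"] assms
  by simp

definition binary_ent :: "real \<Rightarrow> real \<Rightarrow> real" where
  "binary_ent u v = ent u (u + v) + ent v (u + v)"

lemma binary_ent_nonneg: "0 \<le> u \<Longrightarrow> 0 \<le> v \<Longrightarrow> 0 \<le> binary_ent u v"
  by (simp add: binary_ent_def ent_nonneg)

lemma binary_ent_superadd:
  assumes "0 \<le> u1" "0 \<le> v1" "0 \<le> u2" "0 \<le> v2"
  shows "binary_ent u1 v1 + binary_ent u2 v2 \<le> binary_ent (u1 + u2) (v1 + v2)"
  using ent_superadd[of u1 "u1 + v1" u2 "u2 + v2"] ent_superadd[of v1 "u1 + v1" v2 "u2 + v2"] assms
  by (simp add: binary_ent_def algebra_simps)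

lemma binary_ent_le:
  assumes "0 \<le> u" "0 \<le> v"
  shows "binary_ent u v \<le> (u + v) * ln 2"
proof -
  have "binary_ent u v \<le> (u * ln 2 + (u + v) / 2 - u) + (v * ln 2 + (u + v) / 2 - v)"
    unfolding binary_ent_def using assms by (intro add_mono ent_tangent) auto
  then show ?thesis by (simp add: distrib_right)
qed

lemma nn_integral_count_space_le_finite_sums:
  fixes f :: "'i \<Rightarrow> ennreal"
  assumes I: "countable I" and bound: "\<And>F. finite F \<Longrightarrow> F \<subseteq> I \<Longrightarrow> sum f F \<le> B"
  shows "(\<integral>\<^sup>+i. f i \<partial>count_space I) \<le> B"
proof (cases "finite I")
  case True
  then show ?thesis using bound by (simp add: nn_integral_count_space_finite)
next
  case False
  note enum = bij_betw_from_nat_into[OF I False]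
  have "(\<integral>\<^sup>+i. f i \<partial>count_space I) = (\<Sum>n. f (from_nat_into I n))"
    by (simp add: nn_integral_bij_count_space[symmetric, OF enum] nn_integral_count_space_nat)
  also have "\<dots> \<le> B"
  proof (rule suminf_le_const)
    fix n
    have "inj_on (from_nat_into I) {..<n}"
      using enum by (auto simp: bij_betw_def intro: inj_on_subset)
    then have "(\<Sum>k<n. f (from_nat_into I k)) = sum f (from_nat_into I ` {..<n})"
      by (simp add: sum.reindex)
    also have "\<dots> \<le> B"
      using enum by (intro bound) (auto simp: bij_betw_def)
    finally show "(\<Sum>k<n. f (from_nat_into I k)) \<le> B" .
  qed simp
  finally show ?thesis .
qed

lemma superadditive_countable_le:
  fixes M :: "'a measure" and G :: "'a set \<Rightarrow> ennreal" and X :: "'i \<Rightarrow> 'a set"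
  assumes super: "\<And>Z1 Z2. Z1 \<in> sets M \<Longrightarrow> Z2 \<in> sets M \<Longrightarrow> Z1 \<inter> Z2 = {} \<Longrightarrow>
                           G Z1 + G Z2 \<le> G (Z1 \<union> Z2)"
    and I: "countable I" and X: "\<And>i. i \<in> I \<Longrightarrow> X i \<in> sets M" and disj: "disjoint_family_on X I"
    and E: "E \<in> sets M" "\<And>i. i \<in> I \<Longrightarrow> X i \<subseteq> E"
  shows "(\<integral>\<^sup>+i. G (X i) \<partial>count_space I) \<le> G E"
proof (rule nn_integral_count_space_le_finite_sums[OF I])
  fix F assume F: "finite F" "F \<subseteq> I"
  define U where "U = (\<Union>i\<in>F. X i)"
  have U: "U \<in> sets M" "U \<subseteq> E"
    using F X E unfolding U_def by (auto intro: sets.finite_UN)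
  have "(\<Sum>i\<in>F. G (X i)) \<le> G U"
    using F unfolding U_def
  proof (induction F rule: finite_induct)
    case (insert i F)
    have i: "i \<in> I" "X i \<in> sets M" and F_sub: "F \<subseteq> I"
      using insert.prems X by auto
    have "X i \<inter> X j = {}" if "j \<in> F" for j
      using disjoint_family_onD[OF disj i(1)] F_sub insert.hyps(2) that by auto
    then have disjoint: "X i \<inter> (\<Union>j\<in>F. X j) = {}"
      by blast
    have "(\<Union>j\<in>F. X j) \<in> sets M"
      using F_sub X insert.hyps(1) by (intro sets.finite_UN) auto
    then have super_step: "G (X i) + G (\<Union>j\<in>F. X j) \<le> G (\<Union>j\<in>insert i F. X j)"
      using super[OF i(2) _ disjoint] by simp
    have "(\<Sum>j\<in>insert i F. G (X j)) = G (X i) + (\<Sum>j\<in>F. G (X j))"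
      using insert.hyps by simp
    also have "\<dots> \<le> G (X i) + G (\<Union>j\<in>F. X j)"
      using insert.IH F_sub by (intro add_left_mono)
    also note super_step
    finally show ?case .
  qed simp
  also have "G U \<le> G U + G (E - U)"
    by (rule add_increasing2) simp_all
  also have "\<dots> \<le> G (U \<union> (E - U))"
    using U E by (intro super) auto
  also have "U \<union> (E - U) = E"
    using U by blast
  finally show "sum (\<lambda>i. G (X i)) F \<le> G E" .
qed

lemma countable_partition_join:
  assumes Q: "countable_partition M Q" and R: "countable_partition M R"
  shows "countable_partition M (join_partition Q R)"
proof -
  have Q': "countable Q" "Q \<subseteq> sets M" "disjoint Q" "\<Union>Q = space M"
    and R': "countable R" "R \<subseteq> sets M" "disjoint R" "\<Union>R = space M"
    using Q R by (auto simp: countable_partition_def)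
  have "join_partition Q R = (\<lambda>(q, r). q \<inter> r) ` (Q \<times> R)"
    unfolding join_partition_def by auto
  then have "countable (join_partition Q R)"
    using Q' R' by simp
  moreover have "join_partition Q R \<subseteq> sets M"
    using Q' R' unfolding join_partition_def by auto
  moreover have "disjoint (join_partition Q R)"
  proof (rule disjointI)
    fix c1 c2 assume "c1 \<in> join_partition Q R" "c2 \<in> join_partition Q R" "c1 \<noteq> c2"
    then obtain q1 r1 q2 r2 where c: "c1 = q1 \<inter> r1" "c2 = q2 \<inter> r2"
      and mem: "q1 \<in> Q" "r1 \<in> R" "q2 \<in> Q" "r2 \<in> R" and "q1 \<noteq> q2 \<or> r1 \<noteq> r2"
      unfolding join_partition_def by blast
    then have "q1 \<inter> q2 = {} \<or> r1 \<inter> r2 = {}"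
      using disjointD[OF Q'(3) mem(1,3)] disjointD[OF R'(3) mem(2,4)] by blast
    then show "c1 \<inter> c2 = {}"
      using c by blast
  qed
  moreover have "\<Union>(join_partition Q R) = space M"
  proof
    show "\<Union>(join_partition Q R) \<subseteq> space M"
      using Q'(4) unfolding join_partition_def by blast
    show "space M \<subseteq> \<Union>(join_partition Q R)"
    proof
      fix x assume "x \<in> space M"
      then obtain q r where "q \<in> Q" "r \<in> R" "x \<in> q" "x \<in> r"
        using Q'(4) R'(4) by blast
      then show "x \<in> \<Union>(join_partition Q R)"
        unfolding join_partition_def by blast
    qed
  qed
  ultimately show ?thesis
    by (simp add: countable_partition_def)
qed

lemma join_partition_refines: "c \<in> join_partition Q R \<Longrightarrow> \<exists>r\<in>R. c \<subseteq> r"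
  by (auto simp: join_partition_def)

(* Unnormalised entropy of P on the set c, i.e. mu(c) H_{mu|c}(P). *)
definition local_entropy :: "'a measure \<Rightarrow> 'a set set \<Rightarrow> 'a set \<Rightarrow> ennreal" where
  "local_entropy M P c = (\<integral>\<^sup>+p. ennreal (ent (measure M (p \<inter> c)) (measure M c)) \<partial>count_space P)"

context finite_measure
begin

lemma measure_partition_sum:
  assumes P: "countable_partition M P" and Z: "Z \<in> sets M"
  shows "(\<integral>\<^sup>+p. ennreal (measure M (p \<inter> Z)) \<partial>count_space P) = ennreal (measure M Z)"
proof -
  have P': "countable P" "P \<subseteq> sets M" "disjoint P" "\<Union>P = space M"
    using P by (auto simp: countable_partition_def)
  have "disjoint_family_on (\<lambda>p. p \<inter> Z) P"
    using disjointD[OF P'(3)] unfolding disjoint_family_on_def by blast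
  then have "emeasure M (\<Union>p\<in>P. p \<inter> Z) = (\<integral>\<^sup>+p. emeasure M (p \<inter> Z) \<partial>count_space P)"
    using P' Z by (intro emeasure_UN_countable) auto
  moreover have "(\<Union>p\<in>P. p \<inter> Z) = Z"
    using P'(4) sets.sets_into_space[OF Z] by auto
  ultimately show ?thesis
    by (simp add: emeasure_eq_measure)
qed

lemma measure_Int_Un_disjoint:
  assumes "p \<in> sets M" "Z1 \<in> sets M" "Z2 \<in> sets M" "Z1 \<inter> Z2 = {}"
  shows "measure M (p \<inter> (Z1 \<union> Z2)) = measure M (p \<inter> Z1) + measure M (p \<inter> Z2)"
proof -
  have "measure M (p \<inter> (Z1 \<union> Z2)) = measure M ((p \<inter> Z1) \<union> (p \<inter> Z2))"
    by (simp add: Int_Un_distrib)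
  also have "\<dots> = measure M (p \<inter> Z1) + measure M (p \<inter> Z2)"
    using assms by (intro finite_measure_Union) auto
  finally show ?thesis .
qed

lemma ent_measure_nonneg:
  "p \<in> sets M \<Longrightarrow> Z \<in> sets M \<Longrightarrow> 0 \<le> ent (measure M (p \<inter> Z)) (measure M Z)"
  by (intro ent_nonneg) (auto intro!: finite_measure_mono)

lemma local_entropy_superadd:
  assumes P: "P \<subseteq> sets M" and Z: "Z1 \<in> sets M" "Z2 \<in> sets M" "Z1 \<inter> Z2 = {}"
  shows "local_entropy M P Z1 + local_entropy M P Z2 \<le> local_entropy M P (Z1 \<union> Z2)"
proof -
  have pointwise: "ennreal (ent (measure M (p \<inter> Z1)) (measure M Z1))
                     + ennreal (ent (measure M (p \<inter> Z2)) (measure M Z2))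
                   \<le> ennreal (ent (measure M (p \<inter> (Z1 \<union> Z2))) (measure M (Z1 \<union> Z2)))"
    if p: "p \<in> sets M" for p
  proof -
    have "ent (measure M (p \<inter> Z1)) (measure M Z1) + ent (measure M (p \<inter> Z2)) (measure M Z2)
            \<le> ent (measure M (p \<inter> Z1) + measure M (p \<inter> Z2)) (measure M Z1 + measure M Z2)"
      using p Z by (intro ent_superadd) (auto intro!: finite_measure_mono)
    also have "\<dots> = ent (measure M (p \<inter> (Z1 \<union> Z2))) (measure M (Z1 \<union> Z2))"
      using measure_Int_Un_disjoint[OF p Z] measure_Int_Un_disjoint[OF sets.top Z] Z
      by (simp add: Int_absorb1 sets.sets_into_space)
    finally show ?thesis
      using ent_measure_nonneg[OF p Z(1)] ent_measure_nonneg[OF p Z(2)]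
      by (simp add: ennreal_plus[symmetric] del: ennreal_plus)
  qed
  have "local_entropy M P Z1 + local_entropy M P Z2
          = (\<integral>\<^sup>+p. ennreal (ent (measure M (p \<inter> Z1)) (measure M Z1))
                   + ennreal (ent (measure M (p \<inter> Z2)) (measure M Z2)) \<partial>count_space P)"
    unfolding local_entropy_def by (rule nn_integral_add[symmetric]) auto
  also have "\<dots> \<le> local_entropy M P (Z1 \<union> Z2)"
    unfolding local_entropy_def using P by (intro nn_integral_mono pointwise) auto
  finally show ?thesis .
qed

lemma local_entropy_mono:
  assumes P: "P \<subseteq> sets M" and Z: "Z1 \<in> sets M" "Z2 \<in> sets M" "Z1 \<subseteq> Z2"
  shows "local_entropy M P Z1 \<le> local_entropy M P Z2"
proof -
  have "local_entropy M P Z1 \<le> local_entropy M P Z1 + local_entropy M P (Z2 - Z1)"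
    by simp
  also have "\<dots> \<le> local_entropy M P (Z1 \<union> (Z2 - Z1))"
    using Z by (intro local_entropy_superadd P) auto
  also have "Z1 \<union> (Z2 - Z1) = Z2"
    using Z by blast
  finally show ?thesis .
qed

lemma local_entropy_union_le:
  assumes P: "countable_partition M P" and Z: "Z1 \<in> sets M" "Z2 \<in> sets M" "Z1 \<inter> Z2 = {}"
  shows "local_entropy M P (Z1 \<union> Z2)
           \<le> local_entropy M P Z1 + local_entropy M P Z2 + ennreal (binary_ent (measure M Z1) (measure M Z2))"
proof -
  have Ps: "P \<subseteq> sets M" using P by (simp add: countable_partition_def)
  define y1 y2 where "y1 = measure M Z1" and "y2 = measure M Z2"
  define L1 L2 where "L1 = ln ((y1 + y2) / y1)" and "L2 = ln ((y1 + y2) / y2)"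
  have ln_ratio: "0 \<le> ln ((a + b) / a)" if "0 \<le> a" "0 \<le> b" for a b :: real
    using that by (cases "a = 0") (auto intro!: ln_ge_zero simp: le_divide_eq_1)
  have L: "0 \<le> L1" "0 \<le> L2"
    unfolding L1_def L2_def y1_def y2_def using ln_ratio[of "measure M Z2" "measure M Z1"]
    by (auto intro: ln_ratio simp: add.commute)
  let ?f1 = "\<lambda>p. ennreal (ent (measure M (p \<inter> Z1)) y1)"
  let ?f2 = "\<lambda>p. ennreal (ent (measure M (p \<inter> Z2)) y2)"
  let ?g1 = "\<lambda>p. ennreal (measure M (p \<inter> Z1)) * ennreal L1"
  let ?g2 = "\<lambda>p. ennreal (measure M (p \<inter> Z2)) * ennreal L2"
  have pointwise: "ennreal (ent (measure M (p \<inter> (Z1 \<union> Z2))) (measure M (Z1 \<union> Z2)))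
                     \<le> ?f1 p + ?f2 p + ?g1 p + ?g2 p" if p: "p \<in> sets M" for p
  proof -
    define x1 x2 where "x1 = measure M (p \<inter> Z1)" and "x2 = measure M (p \<inter> Z2)"
    have x: "0 \<le> x1" "x1 \<le> y1" "0 \<le> x2" "x2 \<le> y2"
      using p Z by (auto simp: x1_def x2_def y1_def y2_def intro!: finite_measure_mono)
    have "ent (measure M (p \<inter> (Z1 \<union> Z2))) (measure M (Z1 \<union> Z2)) = ent (x1 + x2) (y1 + y2)"
      using measure_Int_Un_disjoint[OF p Z] measure_Int_Un_disjoint[OF sets.top Z] Z
      by (simp add: x1_def x2_def y1_def y2_def Int_absorb1 sets.sets_into_space)
    also have "\<dots> \<le> ent x1 y1 + ent x2 y2 + x1 * L1 + x2 * L2"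
      unfolding L1_def L2_def by (rule ent_union_le[OF x])
    finally show ?thesis
      using x L ent_nonneg[of x1 y1] ent_nonneg[of x2 y2]
      by (simp add: x1_def[symmetric] x2_def[symmetric] ennreal_plus[symmetric] ennreal_mult[symmetric]
          del: ennreal_plus)
  qed
  have "local_entropy M P (Z1 \<union> Z2) \<le> (\<integral>\<^sup>+p. ?f1 p + ?f2 p + ?g1 p + ?g2 p \<partial>count_space P)"
    unfolding local_entropy_def using Ps by (intro nn_integral_mono pointwise) auto
  also have "\<dots> = local_entropy M P Z1 + local_entropy M P Z2
                   + ((\<integral>\<^sup>+p. ?g1 p \<partial>count_space P) + (\<integral>\<^sup>+p. ?g2 p \<partial>count_space P))"
    by (simp add: nn_integral_add local_entropy_def y1_def y2_def add.assoc)
  also have "(\<integral>\<^sup>+p. ?g1 p \<partial>count_space P) + (\<integral>\<^sup>+p. ?g2 p \<partial>count_space P)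
               = ennreal y1 * ennreal L1 + ennreal y2 * ennreal L2"
    using measure_partition_sum[OF P Z(1)] measure_partition_sum[OF P Z(2)]
    by (simp add: nn_integral_multc y1_def y2_def)
  also have "\<dots> = ennreal (binary_ent y1 y2)"
    using L by (simp add: binary_ent_def ent_def L1_def L2_def y1_def y2_def ennreal_mult[symmetric]
        ennreal_plus[symmetric] del: ennreal_plus)
  finally show ?thesis
    by (simp add: y1_def y2_def)
qed

(* (c) Passing to a refinement S of R does not increase sum H(. \<inter> B): each cell of S is
   assigned to a cell of R containing it and countable superadditivity is applied inside it. *)
lemma local_entropy_refinement:
  assumes P: "P \<subseteq> sets M"
    and S: "countable S" "S \<subseteq> sets M" "disjoint S" and R: "countable R" "R \<subseteq> sets M"
    and refines: "\<And>c. c \<in> S \<Longrightarrow> \<exists>r\<in>R. c \<subseteq> r" and B: "B \<in> sets M"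
  shows "(\<integral>\<^sup>+c. local_entropy M P (c \<inter> B) \<partial>count_space S)
           \<le> (\<integral>\<^sup>+r. local_entropy M P (r \<inter> B) \<partial>count_space R)"
proof -
  define X where "X r c = (if c \<subseteq> r then c \<inter> B else {})" for r c :: "'a set"
  have "(\<integral>\<^sup>+c. local_entropy M P (c \<inter> B) \<partial>count_space S)
          \<le> (\<integral>\<^sup>+c. \<integral>\<^sup>+r. local_entropy M P (X r c) \<partial>count_space R \<partial>count_space S)"
  proof (intro nn_integral_mono)
    fix c assume "c \<in> space (count_space S)"
    then obtain r where r: "r \<in> R" "c \<subseteq> r"
      using refines by auto
    then have "local_entropy M P (c \<inter> B) = local_entropy M P (X r c)"
      by (simp add: X_def)
    also have "\<dots> \<le> (\<integral>\<^sup>+r. local_entropy M P (X r c) \<partial>count_space R)"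
      by (rule nn_integral_ge_point) (use r in simp)
    finally show "local_entropy M P (c \<inter> B) \<le> (\<integral>\<^sup>+r. local_entropy M P (X r c) \<partial>count_space R)" .
  qed
  also have "\<dots> = (\<integral>\<^sup>+r. \<integral>\<^sup>+c. local_entropy M P (X r c) \<partial>count_space S \<partial>count_space R)"
    by (rule nn_integral_count_space_nn_integral[OF R(1)]) auto
  also have "\<dots> \<le> (\<integral>\<^sup>+r. local_entropy M P (r \<inter> B) \<partial>count_space R)"
  proof (intro nn_integral_mono)
    fix r assume "r \<in> space (count_space R)"
    then have r: "r \<in> sets M" using R by auto
    have disj: "disjoint_family_on (X r) S"
      unfolding disjoint_family_on_def X_def using disjointD[OF S(3)] by auto
    show "(\<integral>\<^sup>+c. local_entropy M P (X r c) \<partial>count_space S) \<le> local_entropy M P (r \<inter> B)"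
      by (rule superadditive_countable_le[OF local_entropy_superadd[OF P] S(1) _ disj])
         (use S(2) r B in \<open>auto simp: X_def\<close>)
  qed
  finally show ?thesis .
qed

lemma binary_ent_sum_le:
  assumes S: "countable S" "S \<subseteq> sets M" "disjoint S"
    and AB: "A \<in> sets M" "B \<in> sets M" "A \<inter> B = {}"
  shows "(\<integral>\<^sup>+c. ennreal (binary_ent (measure M (c \<inter> A)) (measure M (c \<inter> B))) \<partial>count_space S)
           \<le> ennreal (measure M (A \<union> B) * ln 2)"
proof -
  let ?G = "\<lambda>Z. ennreal (binary_ent (measure M (Z \<inter> A)) (measure M (Z \<inter> B)))"
  have super: "?G Z1 + ?G Z2 \<le> ?G (Z1 \<union> Z2)"
    if Z: "Z1 \<in> sets M" "Z2 \<in> sets M" "Z1 \<inter> Z2 = {}" for Z1 Z2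
  proof -
    have "measure M ((Z1 \<union> Z2) \<inter> C) = measure M (Z1 \<inter> C) + measure M (Z2 \<inter> C)"
      if "C \<in> sets M" for C
      using measure_Int_Un_disjoint[OF that Z] by (simp add: Int_commute)
    then show ?thesis
      using binary_ent_superadd[of "measure M (Z1 \<inter> A)" "measure M (Z1 \<inter> B)"
          "measure M (Z2 \<inter> A)" "measure M (Z2 \<inter> B)"] binary_ent_nonneg AB
      by (simp add: ennreal_plus[symmetric] del: ennreal_plus)
  qed
  have disj: "disjoint_family_on (\<lambda>c. c) S"
    unfolding disjoint_family_on_def using disjointD[OF S(3)] by auto
  have "(\<integral>\<^sup>+c. ?G c \<partial>count_space S) \<le> ?G (space M)"
    by (rule superadditive_countable_le[OF super S(1) _ disj]) (use S(2) in \<open>auto dest: sets.sets_into_space\<close>)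
  also have "?G (space M) = ennreal (binary_ent (measure M A) (measure M B))"
    using AB by (simp add: Int_absorb1 sets.sets_into_space)
  also have "\<dots> \<le> ennreal ((measure M A + measure M B) * ln 2)"
    by (intro ennreal_leI binary_ent_le) simp_all
  also have "measure M A + measure M B = measure M (A \<union> B)"
    using AB by (simp add: finite_measure_Union)
  finally show ?thesis .
qed

lemma weighted_part_entropy:
  assumes c: "c \<in> sets M" and P: "P \<subseteq> sets M"
  shows "ennreal (measure M c) * part_entropy (uniform_measure M c) P = local_entropy M P c"
proof (cases "measure M c = 0")
  case True
  then show ?thesis
    by (simp add: local_entropy_def ent_def)
next
  case False
  then have m: "0 < measure M c"
    using measure_nonneg[of M c] by linarith
  have "emeasure M c \<noteq> 0" "emeasure M c \<noteq> \<infinity>"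
    using m by (simp_all add: emeasure_eq_measure)
  then have "part_entropy (uniform_measure M c) P
               = (\<integral>\<^sup>+p. ennreal (eta (measure M (p \<inter> c) / measure M c)) \<partial>count_space P)"
    unfolding part_entropy_def using P by (intro nn_integral_cong) (auto simp: Int_commute)
  then have "ennreal (measure M c) * part_entropy (uniform_measure M c) P
               = (\<integral>\<^sup>+p. ennreal (measure M c) * ennreal (eta (measure M (p \<inter> c) / measure M c))
                   \<partial>count_space P)"
    by (simp add: nn_integral_cmult)
  also have "\<dots> = (\<integral>\<^sup>+p. ennreal (measure M c * eta (measure M (p \<inter> c) / measure M c))
                   \<partial>count_space P)"
    by (simp add: ennreal_mult')
  also have "\<dots> = local_entropy M P c"
    unfolding local_entropy_def using m by (simp add: eta_scale)
  finally show ?thesis .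
qed

lemma cond_entropy_local:
  assumes "T \<subseteq> sets M" "P \<subseteq> sets M"
  shows "cond_entropy M P T = (\<integral>\<^sup>+r. local_entropy M P r \<partial>count_space T)"
  unfolding cond_entropy_def using assms
  by (intro nn_integral_cong) (auto intro!: weighted_part_entropy)

lemma local_entropy_uniform:
  assumes A: "A \<in> sets M" "0 < measure M A" and c: "c \<in> sets M" and P: "P \<subseteq> sets M"
  shows "ennreal (measure M A) * local_entropy (uniform_measure M A) P c = local_entropy M P (c \<inter> A)"
proof -
  have e: "emeasure M A \<noteq> 0" "emeasure M A \<noteq> \<infinity>"
    using A by (simp_all add: emeasure_eq_measure)
  have scaled: "measure M A * ent (measure (uniform_measure M A) (p \<inter> c)) (measure (uniform_measure M A) c)
          = ent (measure M (p \<inter> (c \<inter> A))) (measure M (c \<inter> A))" if p: "p \<in> sets M" for p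
    using ent_scale[OF A(2), of "measure M (A \<inter> (p \<inter> c))" "measure M (A \<inter> c)"] e p c
    by (simp add: Int_ac)
  then have "ennreal (measure M A) * ennreal (ent (measure (uniform_measure M A) (p \<inter> c))
                                                 (measure (uniform_measure M A) c))
          = ennreal (ent (measure M (p \<inter> (c \<inter> A))) (measure M (c \<inter> A)))" if "p \<in> P" for p
    using scaled[of p] that P by (auto simp: ennreal_mult'[symmetric])
  then show ?thesis
    unfolding local_entropy_def
    by (simp add: nn_integral_cmult[symmetric]) (intro nn_integral_cong; simp)
qed

lemma cond_entropy_uniform:
  assumes A: "A \<in> sets M" "0 < measure M A" and T: "T \<subseteq> sets M" and P: "P \<subseteq> sets M"
  shows "ennreal (measure M A) * cond_entropy (uniform_measure M A) P T
           = (\<integral>\<^sup>+r. local_entropy M P (r \<inter> A) \<partial>count_space T)"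
proof -
  have "prob_space (uniform_measure M A)"
    using A by (intro prob_space_uniform_measure) (simp_all add: emeasure_eq_measure)
  then have "cond_entropy (uniform_measure M A) P T
               = (\<integral>\<^sup>+r. local_entropy (uniform_measure M A) P r \<partial>count_space T)"
    using T P by (intro finite_measure.cond_entropy_local prob_space.finite_measure) auto
  then have "ennreal (measure M A) * cond_entropy (uniform_measure M A) P T
      = (\<integral>\<^sup>+r. ennreal (measure M A) * local_entropy (uniform_measure M A) P r \<partial>count_space T)"
    by (simp add: nn_integral_cmult)
  also have "\<dots> = (\<integral>\<^sup>+r. local_entropy M P (r \<inter> A) \<partial>count_space T)"
    using T by (intro nn_integral_cong local_entropy_uniform[OF A _ P]) auto
  finally show ?thesis .
qed

lemma conditioning_bound:
  assumes P: "countable_partition M P" and R: "countable_partition M R"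
    and S: "countable_partition M S" and refines: "\<And>c. c \<in> S \<Longrightarrow> \<exists>r\<in>R. c \<subseteq> r"
    and A: "A \<in> sets M"
  shows "(\<integral>\<^sup>+r. local_entropy M P (r \<inter> A) \<partial>count_space R) + (\<integral>\<^sup>+c. local_entropy M P c \<partial>count_space S)
           \<le> (\<integral>\<^sup>+r. local_entropy M P r \<partial>count_space R) + (\<integral>\<^sup>+c. local_entropy M P (c \<inter> A) \<partial>count_space S)
             + ennreal (measure M (space M) * ln 2)"
proof -
  let ?H = "local_entropy M P"
  define A' where "A' = space M - A"
  have P': "P \<subseteq> sets M" and R': "countable R" "R \<subseteq> sets M"
    and S': "countable S" "S \<subseteq> sets M" "disjoint S"
    using P R S by (auto simp: countable_partition_def)
  have A': "A' \<in> sets M" "A \<inter> A' = {}" "A \<union> A' = space M"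
    using A sets.sets_into_space[OF A] by (auto simp: A'_def)
  have split: "c \<inter> A \<in> sets M" "c \<inter> A' \<in> sets M" "(c \<inter> A) \<inter> (c \<inter> A') = {}"
    "(c \<inter> A) \<union> (c \<inter> A') = c" if "c \<in> sets M" for c
    using that A A' sets.sets_into_space[OF that] by auto
  define HRA HRA' HR where "HRA = (\<integral>\<^sup>+r. ?H (r \<inter> A) \<partial>count_space R)"
    and "HRA' = (\<integral>\<^sup>+r. ?H (r \<inter> A') \<partial>count_space R)" and "HR = (\<integral>\<^sup>+r. ?H r \<partial>count_space R)"
  define HSA HSA' HS where "HSA = (\<integral>\<^sup>+c. ?H (c \<inter> A) \<partial>count_space S)"
    and "HSA' = (\<integral>\<^sup>+c. ?H (c \<inter> A') \<partial>count_space S)" and "HS = (\<integral>\<^sup>+c. ?H c \<partial>count_space S)"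
  define Hbin where
    "Hbin = (\<integral>\<^sup>+c. ennreal (binary_ent (measure M (c \<inter> A)) (measure M (c \<inter> A'))) \<partial>count_space S)"
  have "HRA + HRA' = (\<integral>\<^sup>+r. ?H (r \<inter> A) + ?H (r \<inter> A') \<partial>count_space R)"
    unfolding HRA_def HRA'_def by (rule nn_integral_add[symmetric]) auto
  also have "\<dots> \<le> HR"
    unfolding HR_def using R' local_entropy_superadd[OF P' split(1-3)] split(4)
    by (intro nn_integral_mono) (metis in_mono space_count_space)
  finally have restrict: "HRA + HRA' \<le> HR" .
  have "HS \<le> (\<integral>\<^sup>+c. ?H (c \<inter> A) + ?H (c \<inter> A')
                 + ennreal (binary_ent (measure M (c \<inter> A)) (measure M (c \<inter> A'))) \<partial>count_space S)"
    unfolding HS_def using S' local_entropy_union_le[OF P split(1-3)] split(4)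
    by (intro nn_integral_mono) (metis in_mono space_count_space)
  also have "\<dots> = HSA + HSA' + Hbin"
    unfolding HSA_def HSA'_def Hbin_def by (simp add: nn_integral_add)
  finally have decompose: "HS \<le> HSA + HSA' + Hbin" .
  have refine: "HSA' \<le> HRA'"
    unfolding HSA'_def HRA'_def by (rule local_entropy_refinement[OF P' S' R' refines A'(1)])
  have binary: "Hbin \<le> ennreal (measure M (space M) * ln 2)"
    unfolding Hbin_def using binary_ent_sum_le[OF S' A A'(1,2)] A'(3) by simp
  have "HRA + HS \<le> HRA + (HSA + HRA' + ennreal (measure M (space M) * ln 2))"
    using decompose refine binary by (intro add_left_mono) (meson add_mono order_trans order_refl)
  also have "\<dots> = (HRA + HRA') + HSA + ennreal (measure M (space M) * ln 2)"
    by (simp add: ac_simps)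
  also have "\<dots> \<le> HR + HSA + ennreal (measure M (space M) * ln 2)"
    using restrict by (intro add_right_mono)
  finally show ?thesis
    unfolding HRA_def HR_def HS_def HSA_def .
qed

end

(* Passing from the inequality between sums to the statement about differences in the
   extended reals; if H(P|R) is infinite the right-hand side is infinite. *)
lemma ereal_scaled_difference_le:
  fixes x y h h' :: ennreal and a c :: real
  assumes a: "0 < a" and c: "0 \<le> c"
    and bound: "ennreal a * x + h' \<le> h + ennreal a * y + ennreal c"
    and x_le: "ennreal a * x \<le> h" and y_le: "ennreal a * y \<le> ennreal a * x"
  shows "ereal a * (enn2ereal x - enn2ereal y) \<le> ereal c + (enn2ereal h - enn2ereal h')"
proof (cases "h = \<top>")
  case False
  have "ennreal a * x \<noteq> \<top>" "ennreal a * y \<noteq> \<top>"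
    using x_le y_le False by (auto simp: top_unique)
  then obtain x' y' where x: "x = ennreal x'" "0 \<le> x'" and y: "y = ennreal y'" "0 \<le> y'"
    using a by (cases x; cases y) (auto simp: ennreal_mult_top)
  obtain r where r: "h = ennreal r" "0 \<le> r"
    using False by (cases h) auto
  have "h' \<le> ennreal a * x + h'"
    by simp
  also have "\<dots> \<le> ennreal (r + a * y' + c)"
    using bound a c r y by (simp add: ennreal_mult[symmetric] ennreal_plus[symmetric] del: ennreal_plus)
  finally have "h' \<noteq> \<top>"
    by (auto simp: top_unique)
  then obtain s where s: "h' = ennreal s" "0 \<le> s"
    by (cases h') auto
  have "ennreal (a * x' + s) \<le> ennreal (r + a * y' + c)"
    using bound a c x y r s by (simp add: ennreal_mult[symmetric] ennreal_plus[symmetric] del: ennreal_plus)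
  then have "a * x' + s \<le> r + a * y' + c"
    using a c x y r s by (subst (asm) ennreal_le_iff) auto
  then show ?thesis
    using x y r s by (simp add: algebra_simps)
qed simp

theorem mainTheorem15:
  fixes M :: "'a measure" and P Q R :: "'a set set" and A :: "'a set"
  assumes "prob_space M"
    and "countable_partition M P" and "countable_partition M Q" and "countable_partition M R"
    and "A \<in> sets M" and "measure M A > 0"
  shows "ereal (measure M A) * cond_mutual_info (uniform_measure M A) P Q R
           \<le> ereal (ln 2) + cond_mutual_info M P Q R"
proof -
  interpret prob_space M by fact
  note P = assms(2) and R = assms(4) and A = assms(5,6)
  let ?S = "join_partition Q R" and ?H = "local_entropy M P"
  have S: "countable_partition M ?S"
    using assms(3) R by (rule countable_partition_join)
  have sets: "P \<subseteq> sets M" "R \<subseteq> sets M" "?S \<subseteq> sets M" "countable R" "countable ?S" "disjoint ?S"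
    using P R S by (auto simp: countable_partition_def)
  have key: "(\<integral>\<^sup>+r. ?H (r \<inter> A) \<partial>count_space R) + (\<integral>\<^sup>+c. ?H c \<partial>count_space ?S)
               \<le> (\<integral>\<^sup>+r. ?H r \<partial>count_space R) + (\<integral>\<^sup>+c. ?H (c \<inter> A) \<partial>count_space ?S) + ennreal (ln 2)"
    using conditioning_bound[OF P R S join_partition_refines A(1)] by (simp add: prob_space)
  have "(\<integral>\<^sup>+r. ?H (r \<inter> A) \<partial>count_space R) \<le> (\<integral>\<^sup>+r. ?H r \<partial>count_space R)"
    using sets A by (intro nn_integral_mono local_entropy_mono) auto
  moreover have "(\<integral>\<^sup>+c. ?H (c \<inter> A) \<partial>count_space ?S) \<le> (\<integral>\<^sup>+r. ?H (r \<inter> A) \<partial>count_space R)"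
    using sets by (intro local_entropy_refinement join_partition_refines A) auto
  ultimately show ?thesis
    using key unfolding cond_mutual_info_def
    by (intro ereal_scaled_difference_le A(2))
      (simp_all add: cond_entropy_local cond_entropy_uniform sets A)
qed

end
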